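(* Suppose $\|\mathbf{T} - \mathbf{T}_0\|_\infty \leq \frac{\pi_{\min}}{\gamma_1}$. Then \begin{gather*} \max_i |\boldsymbol{\pi}(i) - \boldsymbol{\pi}_0(i)| \leq \frac{\pi_{\min}}{2}, \quad \min_i \boldsymbol{\pi}_0(i) \geq \frac{\pi_{\min}}{2}, \quad \max_i \boldsymbol{\pi}_0(i) \leq \pi_{\max} + \frac{\pi_{\min}}{2},\\ \max_i |\boldsymbol{\pi}(i)^{-\frac{1}{2}} - \boldsymbol{\pi}_0(i)^{-\frac{1}{2}}| \leq (\sqrt{2}-1) \gamma_1 \pi_{\min}^{-\frac{3}{2}} \|\mathbf{T} - \mathbf{T}_0\|_\infty,\\ \max_i |\boldsymbol{\pi}(i)^{\frac{1}{2}} - \boldsymbol{\pi}_0(i)^{\frac{1}{2}}| \leq (1-\tfrac{\sqrt{2}}{2}) \gamma_1 \pi_{\min}^{-\frac{1}{2}} \|\mathbf{T} - \mathbf{T}_0\|_\infty. \end{gather*}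
   Context: Let $\mathbf{T},\mathbf{T}_0\in\mathbb{R}^{s\times s}$ be Markov matrices with stationary distributions $\boldsymbol{\pi},\boldsymbol{\pi}_0\in\mathbb{R}^{s}$. Let $\gamma_1:=\sum_{i=2}^s\frac{1}{1-\lambda_i(\mathbf{T})}$, where $\lambda_i$ is the $i$-th largest eigenvalue; it is known that $\|\boldsymbol{\pi}-\boldsymbol{\pi}_0\|_1\le\gamma_1\|\mathbf{T}-\mathbf{T}_0\|_\infty$. Let $\pi_{\min}:=\min_i\boldsymbol{\pi}(i)$ and $\pi_{\max}:=\max_i\boldsymbol{\pi}(i)$. *)

theory Defs
  imports Complex_Main "Jordan_Normal_Form.Char_Poly"
begin

definition markov_matrix :: "nat \<Rightarrow> real mat \<Rightarrow> bool" where
  "markov_matrix s T \<longleftrightarrow> T \<in> carrier_mat s s \<and>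
     (\<forall>i<s. \<forall>j<s. T $$ (i,j) \<ge> 0) \<and> (\<forall>i<s. (\<Sum>j<s. T $$ (i,j)) = 1)"

definition stationary_dist :: "nat \<Rightarrow> real mat \<Rightarrow> (nat \<Rightarrow> real) \<Rightarrow> bool" where
  "stationary_dist s T p \<longleftrightarrow> (\<forall>i<s. p i \<ge> 0) \<and> (\<Sum>i<s. p i) = 1 \<and>
     (\<forall>j<s. (\<Sum>i<s. p i * T $$ (i,j)) = p j)"

definition mat_inf_norm :: "nat \<Rightarrow> real mat \<Rightarrow> real" where
  "mat_inf_norm s A = Max ((\<lambda>i. \<Sum>j<s. \<bar>A $$ (i,j)\<bar>) ` {..<s})"

text \<open>The list lams enumerates the (real) eigenvalues of T with algebraic
  multiplicity, in non-increasing order: lams!0 = lambda_1 >= lambda_2 >= ...\<close>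
definition sorted_eigenvalues :: "nat \<Rightarrow> real mat \<Rightarrow> real list \<Rightarrow> bool" where
  "sorted_eigenvalues s T lams \<longleftrightarrow> length lams = s \<and> sorted (rev lams) \<and>
     char_poly T = (\<Prod>l\<leftarrow>lams. [:- l, 1:])"

text \<open>gamma_1 = sum_{i=2}^s 1/(1 - lambda_i) (0-based: indices 1..s-1).\<close>
definition gamma1 :: "nat \<Rightarrow> real list \<Rightarrow> real" where
  "gamma1 s lams = (\<Sum>i\<in>{1..<s}. 1 / (1 - lams ! i))"

definition pmin :: "nat \<Rightarrow> (nat \<Rightarrow> real) \<Rightarrow> real" where
  "pmin s p = Min (p ` {..<s})"

definition pmax :: "nat \<Rightarrow> (nat \<Rightarrow> real) \<Rightarrow> real" where
  "pmax s p = Max (p ` {..<s})"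

end

theory Submission
  imports Defs
begin

text \<open>Both vectors are probability distributions, so \<open>p - p0\<close> sums to zero and each of its
  entries is at most half its \<open>l\<^sub>1\<close> norm, hence at most \<open>\<gamma>\<^sub>1 \<parallel>T - T0\<parallel>\<^sub>\<infinity> / 2 \<le> \<pi>\<^sub>m\<^sub>i\<^sub>n / 2\<close>.
  This gives \<open>p0 i \<ge> \<pi>\<^sub>m\<^sub>i\<^sub>n / 2\<close>, and the square-root bounds follow from
  \<open>x - y = (x\<^sup>2 - y\<^sup>2) / (x + y)\<close> and \<open>1/x - 1/y = (y - x) / (x y)\<close> for \<open>x = \<surd>p i \<ge> \<surd>\<pi>\<^sub>m\<^sub>i\<^sub>n\<close>
  and \<open>y = \<surd>p0 i \<ge> \<surd>\<pi>\<^sub>m\<^sub>i\<^sub>n / \<surd>2\<close>: the constants \<open>2 - \<surd>2\<close> and \<open>2(\<surd>2 - 1)\<close> are the reciprocals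
  of \<open>1 + 1/\<surd>2\<close> and \<open>(1 + 1/\<surd>2) / \<surd>2\<close>, the lower bounds of \<open>(x + y) / \<surd>\<pi>\<^sub>m\<^sub>i\<^sub>n\<close> and
  \<open>x y (x + y) / \<surd>\<pi>\<^sub>m\<^sub>i\<^sub>n\<^sup>3\<close>.\<close>

lemma abs_le_half_sum_abs_if_sum_eq_0:
  fixes d :: "'a \<Rightarrow> real"
  assumes "finite A" and "sum d A = 0" and "i \<in> A"
  shows "2 * \<bar>d i\<bar> \<le> (\<Sum>j\<in>A. \<bar>d j\<bar>)"
proof -
  have "d i = - sum d (A - {i})"
    using assms by (simp add: sum.remove)
  then have "\<bar>d i\<bar> \<le> (\<Sum>j\<in>A - {i}. \<bar>d j\<bar>)"
    by (metis abs_minus_cancel sum_abs)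
  moreover have "(\<Sum>j\<in>A. \<bar>d j\<bar>) = \<bar>d i\<bar> + (\<Sum>j\<in>A - {i}. \<bar>d j\<bar>)"
    using assms by (simp add: sum.remove)
  ultimately show ?thesis by linarith
qed

lemma le_two_minus_sqrt2_mult_add:
  fixes x y r :: real
  assumes "r \<le> x" and "r / sqrt 2 \<le> y"
  shows "r \<le> (2 - sqrt 2) * (x + y)"
proof -
  have "r = (2 - sqrt 2) * (r * (1 + 1 / sqrt 2))"
    by (simp add: field_simps)
  also have "\<dots> \<le> (2 - sqrt 2) * (x + y)"
    using assms real_sqrt_le_mono[of 2 4] by (intro mult_left_mono) (simp_all add: distrib_left)
  finally show ?thesis .
qed

lemma abs_diff_le_abs_diff_squares:
  fixes x y r :: real
  assumes "0 < r" and "r \<le> x" and "r / sqrt 2 \<le> y"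
  shows "\<bar>x - y\<bar> \<le> (2 - sqrt 2) * \<bar>x\<^sup>2 - y\<^sup>2\<bar> / r"
proof -
  have "0 < r / sqrt 2"
    using assms by simp
  then have "0 < x + y"
    using assms by linarith
  have "x\<^sup>2 - y\<^sup>2 = (x - y) * (x + y)"
    by (simp add: power2_eq_square algebra_simps)
  then have "\<bar>x\<^sup>2 - y\<^sup>2\<bar> = \<bar>x - y\<bar> * (x + y)"
    using \<open>0 < x + y\<close> by (simp add: abs_mult)
  have "\<bar>x - y\<bar> * r \<le> \<bar>x - y\<bar> * ((2 - sqrt 2) * (x + y))"
    using le_two_minus_sqrt2_mult_add[OF assms(2,3)] by (rule mult_left_mono) simp
  also have "\<dots> = (2 - sqrt 2) * \<bar>x\<^sup>2 - y\<^sup>2\<bar>"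
    unfolding \<open>\<bar>x\<^sup>2 - y\<^sup>2\<bar> = \<bar>x - y\<bar> * (x + y)\<close> by (simp only: ac_simps)
  finally show ?thesis
    using \<open>0 < r\<close> by (subst pos_le_divide_eq)
qed

lemma abs_inverse_diff_le_abs_diff_squares:
  fixes x y r :: real
  assumes "0 < r" and "r \<le> x" and "r / sqrt 2 \<le> y"
  shows "\<bar>1 / x - 1 / y\<bar> \<le> 2 * (sqrt 2 - 1) * \<bar>x\<^sup>2 - y\<^sup>2\<bar> / r ^ 3"
proof -
  have "0 < r / sqrt 2"
    using assms by simp
  then have "0 < x" "0 < y"
    using assms by linarith+
  have "r\<^sup>2 / sqrt 2 \<le> x * y"
    using mult_mono[OF assms(2,3)] assms by (simp add: power2_eq_square)
  have "\<bar>1 / x - 1 / y\<bar> = \<bar>x - y\<bar> / (x * y)"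
    using \<open>0 < x\<close> \<open>0 < y\<close> by (simp add: field_simps abs_minus_commute)
  also have "\<dots> \<le> ((2 - sqrt 2) * \<bar>x\<^sup>2 - y\<^sup>2\<bar> / r) / (r\<^sup>2 / sqrt 2)"
    using abs_diff_le_abs_diff_squares[OF assms] \<open>r\<^sup>2 / sqrt 2 \<le> x * y\<close> assms
    by (intro frac_le) auto
  also have "\<dots> = 2 * (sqrt 2 - 1) * \<bar>x\<^sup>2 - y\<^sup>2\<bar> / r ^ 3"
    using assms by (simp add: field_simps power2_eq_square power3_eq_cube)
  finally show ?thesis .
qed

lemma sqrt_perturbation:
  fixes a b m :: real
  assumes "0 < m" and "m \<le> a" and "m / 2 \<le> b"
  shows "\<bar>sqrt a - sqrt b\<bar> \<le> (2 - sqrt 2) * \<bar>a - b\<bar> / sqrt m"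
    and "\<bar>1 / sqrt a - 1 / sqrt b\<bar> \<le> 2 * (sqrt 2 - 1) * \<bar>a - b\<bar> / sqrt m ^ 3"
proof -
  have "0 < sqrt m" and "sqrt m \<le> sqrt a"
    using assms by simp_all
  moreover have "sqrt m / sqrt 2 \<le> sqrt b"
    using assms by (simp flip: real_sqrt_divide)
  moreover have "(sqrt a)\<^sup>2 - (sqrt b)\<^sup>2 = a - b"
    using assms by simp
  ultimately show "\<bar>sqrt a - sqrt b\<bar> \<le> (2 - sqrt 2) * \<bar>a - b\<bar> / sqrt m"
    and "\<bar>1 / sqrt a - 1 / sqrt b\<bar> \<le> 2 * (sqrt 2 - 1) * \<bar>a - b\<bar> / sqrt m ^ 3"
    using abs_diff_le_abs_diff_squares abs_inverse_diff_le_abs_diff_squares by metis+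
qed

lemma powr_neg_half_eq: "0 < x \<Longrightarrow> x powr (-1/2) = 1 / sqrt x"
  by (simp add: powr_minus_divide powr_half_sqrt)

lemma powr_neg_three_halves_eq: "0 < x \<Longrightarrow> x powr (-3/2) = 1 / sqrt x ^ 3"
  by (simp add: powr_half_sqrt_powr powr_minus_divide real_sqrt_power)

lemma powr_half_perturbation:
  fixes a b m d :: real
  assumes "0 \<le> m" and "m \<le> a" and "\<bar>a - b\<bar> \<le> d / 2" and "d \<le> m"
  shows "\<bar>a powr (1/2) - b powr (1/2)\<bar> \<le> (1 - sqrt 2 / 2) * m powr (-1/2) * d"
proof (cases "m = 0")
  case True
  with assms(3,4) have "d = 0"
    using abs_ge_zero[of "a - b"] by linarith
  with assms(3) have "b = a"
    by simp
  with \<open>d = 0\<close> show ?thesis by simp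
next
  case False
  have "a - b \<le> d / 2"
    using abs_le_D1[OF assms(3)] .
  with False assms(1,2,4) have "0 < m" "0 < a" "m / 2 \<le> b"
    by linarith+
  have "\<bar>a powr (1/2) - b powr (1/2)\<bar> = \<bar>sqrt a - sqrt b\<bar>"
    using \<open>0 < m\<close> \<open>0 < a\<close> \<open>m / 2 \<le> b\<close> by (simp add: powr_half_sqrt)
  also have "\<dots> \<le> (2 - sqrt 2) * \<bar>a - b\<bar> / sqrt m"
    using sqrt_perturbation(1)[OF \<open>0 < m\<close> assms(2) \<open>m / 2 \<le> b\<close>] .
  also have "\<dots> \<le> (2 - sqrt 2) * (d / 2) / sqrt m"
    using assms(1,3) real_sqrt_le_mono[of 2 4] by (intro divide_right_mono mult_left_mono) auto
  finally show ?thesis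
    unfolding powr_neg_half_eq[OF \<open>0 < m\<close>] by (simp add: field_simps)
qed

lemma powr_neg_half_perturbation:
  fixes a b m d :: real
  assumes "0 \<le> m" and "m \<le> a" and "\<bar>a - b\<bar> \<le> d / 2" and "d \<le> m"
  shows "\<bar>a powr (-1/2) - b powr (-1/2)\<bar> \<le> (sqrt 2 - 1) * m powr (-3/2) * d"
proof (cases "m = 0")
  case True
  with assms(3,4) have "d = 0"
    using abs_ge_zero[of "a - b"] by linarith
  with assms(3) have "b = a"
    by simp
  with \<open>d = 0\<close> show ?thesis by simp
next
  case False
  have "a - b \<le> d / 2"
    using abs_le_D1[OF assms(3)] .
  with False assms(1,2,4) have "0 < m" "0 < a" "0 < b" "m / 2 \<le> b"
    by linarith+
  have "\<bar>a powr (-1/2) - b powr (-1/2)\<bar> = \<bar>1 / sqrt a - 1 / sqrt b\<bar>"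
    unfolding powr_neg_half_eq[OF \<open>0 < a\<close>] powr_neg_half_eq[OF \<open>0 < b\<close>] ..
  also have "\<dots> \<le> 2 * (sqrt 2 - 1) * \<bar>a - b\<bar> / sqrt m ^ 3"
    using sqrt_perturbation(2)[OF \<open>0 < m\<close> assms(2) \<open>m / 2 \<le> b\<close>] .
  also have "\<dots> \<le> 2 * (sqrt 2 - 1) * (d / 2) / sqrt m ^ 3"
    using assms(1,3) by (intro divide_right_mono mult_left_mono) auto
  also have "\<dots> = (sqrt 2 - 1) * (1 / sqrt m ^ 3) * d"
    by (simp add: algebra_simps)
  finally show ?thesis
    unfolding powr_neg_three_halves_eq[OF \<open>0 < m\<close>] .
qed

lemma mult_le_if_le_divide:
  fixes g x y :: real
  assumes "x \<le> y / g" and "0 \<le> x" and "0 \<le> y"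
  shows "g * x \<le> y"
proof (cases "0 < g")
  case True
  with assms show ?thesis by (simp add: pos_le_divide_eq mult.commute)
next
  case False
  with assms show ?thesis by (smt (verit) mult_nonpos_nonneg)
qed

lemma Max_image_lessThan_le:
  "0 < (s::nat) \<Longrightarrow> (\<And>i. i < s \<Longrightarrow> f i \<le> c) \<Longrightarrow> Max (f ` {..<s}) \<le> c"
  by (subst Max_le_iff) auto

lemma le_Min_image_lessThan:
  "0 < (s::nat) \<Longrightarrow> (\<And>i. i < s \<Longrightarrow> c \<le> f i) \<Longrightarrow> c \<le> Min (f ` {..<s})"
  by (subst Min_ge_iff) auto

lemma stationary_dist_dim_pos: "stationary_dist s T p \<Longrightarrow> 0 < s"
  by (cases s) (auto simp: stationary_dist_def)

lemma pmin_le: "i < s \<Longrightarrow> pmin s p \<le> p i"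
  by (auto simp: pmin_def)

lemma le_pmax: "i < s \<Longrightarrow> p i \<le> pmax s p"
  by (auto simp: pmax_def)

lemma pmin_minus_le_pmin:
  assumes "0 < s" and "\<And>i. i < s \<Longrightarrow> \<bar>p i - q i\<bar> \<le> e"
  shows "pmin s p - e \<le> pmin s q"
  unfolding pmin_def[of s q] using assms(1)
proof (rule le_Min_image_lessThan)
  show "pmin s p - e \<le> q i" if "i < s" for i
    using pmin_le[OF that, of p] assms(2)[OF that] by linarith
qed

lemma pmax_le_pmax_plus:
  assumes "0 < s" and "\<And>i. i < s \<Longrightarrow> \<bar>p i - q i\<bar> \<le> e"
  shows "pmax s q \<le> pmax s p + e"
  unfolding pmax_def[of s q] using assms(1)
proof (rule Max_image_lessThan_le)
  show "q i \<le> pmax s p + e" if "i < s" for i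
    using le_pmax[OF that, of p] assms(2)[OF that] by linarith
qed

lemma stationary_dist_pmin_nonneg: "stationary_dist s T p \<Longrightarrow> 0 \<le> pmin s p"
  using stationary_dist_dim_pos[of s T p] unfolding pmin_def stationary_dist_def
  by (subst Min_ge_iff) auto

lemma mat_inf_norm_nonneg: "0 < s \<Longrightarrow> 0 \<le> mat_inf_norm s A"
  unfolding mat_inf_norm_def
  by (rule order.trans[OF _ Max_ge[where x = "\<Sum>j<s. \<bar>A $$ (0, j)\<bar>"]]) (auto intro: sum_nonneg)

lemma stationary_dist_entry_diff_le:
  assumes "stationary_dist s T p" and "stationary_dist s T0 p0" and "i < s"
  shows "2 * \<bar>p i - p0 i\<bar> \<le> (\<Sum>j<s. \<bar>p j - p0 j\<bar>)"
proof (rule abs_le_half_sum_abs_if_sum_eq_0)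
  show "(\<Sum>j<s. p j - p0 j) = 0"
    using assms by (simp add: stationary_dist_def sum_subtractf)
qed (use assms in auto)

theorem corollary1:
  fixes s :: nat and T T0 :: "real mat" and p p0 :: "nat \<Rightarrow> real" and lams :: "real list"
  assumes "markov_matrix s T" and "markov_matrix s T0"
    and "stationary_dist s T p" and "stationary_dist s T0 p0"
    and "sorted_eigenvalues s T lams"
    and known: "(\<Sum>i<s. \<bar>p i - p0 i\<bar>) \<le> gamma1 s lams * mat_inf_norm s (T - T0)"
    and small: "mat_inf_norm s (T - T0) \<le> pmin s p / gamma1 s lams"
  shows "Max ((\<lambda>i. \<bar>p i - p0 i\<bar>) ` {..<s}) \<le> pmin s p / 2 \<and>
    pmin s p0 \<ge> pmin s p / 2 \<and>
    pmax s p0 \<le> pmax s p + pmin s p / 2 \<and>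
    Max ((\<lambda>i. \<bar>p i powr (-1/2) - p0 i powr (-1/2)\<bar>) ` {..<s})
           \<le> (sqrt 2 - 1) * gamma1 s lams * pmin s p powr (-3/2) * mat_inf_norm s (T - T0) \<and>
    Max ((\<lambda>i. \<bar>p i powr (1/2) - p0 i powr (1/2)\<bar>) ` {..<s})
           \<le> (1 - sqrt 2 / 2) * gamma1 s lams * pmin s p powr (-1/2) * mat_inf_norm s (T - T0)"
proof -
  \<comment> \<open>The Markov and eigenvalue hypotheses enter only through \<open>known\<close>.\<close>
  define N g m where "N = mat_inf_norm s (T - T0)" and "g = gamma1 s lams" and "m = pmin s p"
  have "0 < s" and "0 \<le> m" and "0 \<le> N"
    using assms(3) stationary_dist_dim_pos stationary_dist_pmin_nonneg mat_inf_norm_nonneg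
    unfolding m_def N_def by blast+
  have "g * N \<le> m"
    using small \<open>0 \<le> N\<close> \<open>0 \<le> m\<close> unfolding m_def N_def g_def by (rule mult_le_if_le_divide)
  have dev: "\<bar>p i - p0 i\<bar> \<le> g * N / 2" if "i < s" for i
    using stationary_dist_entry_diff_le[OF assms(3,4) that] known unfolding g_def N_def by argo
  have dev_pmin: "\<bar>p i - p0 i\<bar> \<le> m / 2" if "i < s" for i
    using dev[OF that] \<open>g * N \<le> m\<close> by linarith
  have p_ge: "m \<le> p i" if "i < s" for i
    using pmin_le that unfolding m_def .
  have max_dev: "Max ((\<lambda>i. \<bar>p i - p0 i\<bar>) ` {..<s}) \<le> m / 2"
    using \<open>0 < s\<close> dev_pmin by (rule Max_image_lessThan_le)
  have min_p0: "m / 2 \<le> pmin s p0"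
    using pmin_minus_le_pmin[where p = p and q = p0, OF \<open>0 < s\<close> dev_pmin] unfolding m_def by simp
  have max_p0: "pmax s p0 \<le> pmax s p + m / 2"
    using pmax_le_pmax_plus[where p = p and q = p0, OF \<open>0 < s\<close> dev_pmin] .
  have "\<bar>p i powr (-1/2) - p0 i powr (-1/2)\<bar> \<le> (sqrt 2 - 1) * g * m powr (-3/2) * N" if "i < s" for i
    using powr_neg_half_perturbation[OF \<open>0 \<le> m\<close> p_ge[OF that] dev[OF that] \<open>g * N \<le> m\<close>]
    by (simp only: mult_ac)
  then have max_inverse_sqrt: "Max ((\<lambda>i. \<bar>p i powr (-1/2) - p0 i powr (-1/2)\<bar>) ` {..<s})
      \<le> (sqrt 2 - 1) * g * m powr (-3/2) * N"
    by (rule Max_image_lessThan_le[OF \<open>0 < s\<close>])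
  have "\<bar>p i powr (1/2) - p0 i powr (1/2)\<bar> \<le> (1 - sqrt 2 / 2) * g * m powr (-1/2) * N" if "i < s" for i
    using powr_half_perturbation[OF \<open>0 \<le> m\<close> p_ge[OF that] dev[OF that] \<open>g * N \<le> m\<close>]
    by (simp only: mult_ac)
  then have max_sqrt: "Max ((\<lambda>i. \<bar>p i powr (1/2) - p0 i powr (1/2)\<bar>) ` {..<s})
      \<le> (1 - sqrt 2 / 2) * g * m powr (-1/2) * N"
    by (rule Max_image_lessThan_le[OF \<open>0 < s\<close>])
  show ?thesis
    using max_dev min_p0 max_p0 max_inverse_sqrt max_sqrt unfolding m_def g_def N_def
    by (intro conjI)
qed

end
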